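(* Let $R$ be a ring, $X$ a compact metrizable space, $E\subset X$ a non-empty closed subspace with $Y=X\setminus E$ dense in $X$. Two free $(X,Y,E)$-controlled $R$-modules $R\langle A\rangle_\alpha$ and $R\langle B\rangle_\beta$ are isomorphic in the category of free controlled $R$-modules and controlled homomorphisms if and only if (1) the underlying $R$-modules $R\langle A\rangle$ and $R\langle B\rangle$ are isomorphic, and (2) they have the same support, $\alpha(A)'=\beta(B)'$. If the supports are non-empty then condition (1) holds automatically. Moreover, every compact subset $K\subset E$ is the support of some free controlled $R$-module.
   Context: $R\langle A\rangle$ denotes the free right $R$-module with basis $A$; the carrier $\operatorname{carr}(x)\subset A$ of $x\in R\langle A\rangle$ is the finite set of basis elements appearing with nonzero coefficient in $x$. A free controlled $R$-module $R\langle A\rangle_\alpha$ is a free $R$-module $R\langle A\rangle$ together with a function $\alpha\colon A\to Y$ such that $\alpha^{-1}(K)$ is finite for every compact $K\subset Y$. Its support is the derived set $\alpha(A)'$ of $\alpha(A)$ in $X$ (which lies in $E$). A controlled homomorphism $\varphi\colon R\langle A\rangle_\alpha\to R\langle B\rangle_\beta$ is an $R$-module homomorphism such that for every $x\in E$ and every neighbourhood $U$ of $x$ in $X$ there is a neighbourhood $V\subset U$ of $x$ in $X$ with $\beta(\operatorname{carr}(\varphi(a)))\subset U$ for all $a\in A$ with $\alpha(a)\in V$. *)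

theory Defs
  imports "HOL-Analysis.Analysis"
begin

text \<open>The free right R-module R<A> on a set A: finitely supported functions A -> R
  (vanishing outside A). Addition is pointwise, right scalar action is (x r)(a) = x(a) * r.\<close>

definition free_mod :: "'a set \<Rightarrow> ('a \<Rightarrow> 'r::ring_1) set" where
  "free_mod A = {x. {a. x a \<noteq> 0} \<subseteq> A \<and> finite {a. x a \<noteq> 0}}"

definition carr :: "('a \<Rightarrow> 'r::ring_1) \<Rightarrow> 'a set" where
  "carr x = {a. x a \<noteq> 0}"

definition bvec :: "'a \<Rightarrow> ('a \<Rightarrow> 'r::ring_1)" where
  "bvec a = (\<lambda>b. if b = a then 1 else 0)"

definition rlinear :: "'a set \<Rightarrow> 'b set \<Rightarrow> (('a \<Rightarrow> 'r::ring_1) \<Rightarrow> ('b \<Rightarrow> 'r)) \<Rightarrow> bool" where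
  "rlinear A B \<phi> \<longleftrightarrow>
     (\<forall>x\<in>free_mod A. \<phi> x \<in> free_mod B) \<and>
     (\<forall>x\<in>free_mod A. \<forall>y\<in>free_mod A. \<phi> (\<lambda>a. x a + y a) = (\<lambda>b. \<phi> x b + \<phi> y b)) \<and>
     (\<forall>x\<in>free_mod A. \<forall>r. \<phi> (\<lambda>a. x a * r) = (\<lambda>b. \<phi> x b * r))"

definition mod_iso :: "'r::ring_1 itself \<Rightarrow> 'a set \<Rightarrow> 'b set \<Rightarrow> bool" where
  "mod_iso R A B \<longleftrightarrow>
     (\<exists>(\<phi> :: ('a \<Rightarrow> 'r) \<Rightarrow> ('b \<Rightarrow> 'r)) (\<psi> :: ('b \<Rightarrow> 'r) \<Rightarrow> ('a \<Rightarrow> 'r)).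
        rlinear A B \<phi> \<and> rlinear B A \<psi> \<and>
        (\<forall>x\<in>free_mod A. \<psi> (\<phi> x) = x) \<and> (\<forall>y\<in>free_mod B. \<phi> (\<psi> y) = y))"

definition free_controlled :: "'x topology \<Rightarrow> 'x set \<Rightarrow> 'a set \<Rightarrow> ('a \<Rightarrow> 'x) \<Rightarrow> bool" where
  "free_controlled X E A \<alpha> \<longleftrightarrow>
     \<alpha> ` A \<subseteq> topspace X - E \<and>
     (\<forall>K. compactin (subtopology X (topspace X - E)) K \<longrightarrow> finite {a\<in>A. \<alpha> a \<in> K})"

definition fc_support :: "'x topology \<Rightarrow> 'a set \<Rightarrow> ('a \<Rightarrow> 'x) \<Rightarrow> 'x set" where
  "fc_support X A \<alpha> = X derived_set_of (\<alpha> ` A)"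

definition nbhd_in :: "'x topology \<Rightarrow> 'x set \<Rightarrow> 'x \<Rightarrow> bool" where
  "nbhd_in X U x \<longleftrightarrow> U \<subseteq> topspace X \<and> (\<exists>W. openin X W \<and> x \<in> W \<and> W \<subseteq> U)"

definition controlled_hom :: "'x topology \<Rightarrow> 'x set \<Rightarrow> 'a set \<Rightarrow> ('a \<Rightarrow> 'x) \<Rightarrow> 'b set \<Rightarrow> ('b \<Rightarrow> 'x)
     \<Rightarrow> (('a \<Rightarrow> 'r::ring_1) \<Rightarrow> ('b \<Rightarrow> 'r)) \<Rightarrow> bool" where
  "controlled_hom X E A \<alpha> B \<beta> \<phi> \<longleftrightarrow>
     rlinear A B \<phi> \<and>
     (\<forall>x\<in>E. \<forall>U. nbhd_in X U x \<longrightarrow>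
        (\<exists>V. nbhd_in X V x \<and> V \<subseteq> U \<and>
             (\<forall>a\<in>A. \<alpha> a \<in> V \<longrightarrow> \<beta> ` carr (\<phi> (bvec a)) \<subseteq> U)))"

definition controlled_iso :: "'r::ring_1 itself \<Rightarrow> 'x topology \<Rightarrow> 'x set \<Rightarrow> 'a set \<Rightarrow> ('a \<Rightarrow> 'x)
     \<Rightarrow> 'b set \<Rightarrow> ('b \<Rightarrow> 'x) \<Rightarrow> bool" where
  "controlled_iso R X E A \<alpha> B \<beta> \<longleftrightarrow>
     (\<exists>(\<phi> :: ('a \<Rightarrow> 'r) \<Rightarrow> ('b \<Rightarrow> 'r)) (\<psi> :: ('b \<Rightarrow> 'r) \<Rightarrow> ('a \<Rightarrow> 'r)).
        controlled_hom X E A \<alpha> B \<beta> \<phi> \<and> controlled_hom X E B \<beta> A \<alpha> \<psi> \<and>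
        (\<forall>x\<in>free_mod A. \<psi> (\<phi> x) = x) \<and> (\<forall>y\<in>free_mod B. \<phi> (\<psi> y) = y))"

end

(*
  Work with a metric d on X.  A controlled isomorphism cannot change the support: if x in E
  is a limit point of alpha(A) but not of beta(B), some neighbourhood U of x misses beta(B),
  and control forces every basis vector a with alpha(a) close to x to be sent to a vector
  whose carrier lies in beta^-1(U) = {}, i.e. to 0, contradicting injectivity.

  Conversely, compactness and the finiteness condition on free controlled modules imply
  that for every e > 0 only finitely many alpha(a) are e-far from the support L.  If L is
  empty, A and B are finite and every module isomorphism is controlled.  Otherwise A and B
  are countably infinite (which already gives condition (1)), and a back-and-forth
  enumeration pairs each a with some b such that d(alpha(a), beta(b)) -> 0 along the
  pairing; the permutation of bases induced by this bijection is controlled in both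
  directions, because inside any ball around a point of E only finitely many pairs are far
  apart and their points can be removed from the ball.

  A compact K in E is the support of a sequence in X - E that approaches K and comes
  arbitrarily close to every point of K at arbitrarily late indices.
*)
theory Submission
  imports Defs
begin

section \<open>Back-and-forth matchings\<close>

definition finite_matching :: "'a set \<Rightarrow> 'b set \<Rightarrow> ('a \<times> 'b) set \<Rightarrow> bool" where
  "finite_matching A B Q \<longleftrightarrow> finite Q \<and> Q \<subseteq> A \<times> B \<and> single_valued Q \<and> single_valued (Q\<inverse>)"

lemma finite_matching_converse: "finite_matching B A (Q\<inverse>) \<longleftrightarrow> finite_matching A B Q"
  by (auto simp: finite_matching_def)

lemma finite_matching_extend_Domain:
  assumes Q: "finite_matching A B Q" and "a \<in> A" and "infinite {b\<in>B. R a b}"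
  obtains Q' where "finite_matching A B Q'" "Q \<subseteq> Q'" "\<forall>(x, y) \<in> Q' - Q. R x y" "a \<in> Domain Q'"
proof (cases "a \<in> Domain Q")
  case False
  have "finite (Range Q)"
    using Q by (simp add: finite_matching_def finite_Range)
  then have "{b\<in>B. R a b} - Range Q \<noteq> {}"
    using assms(3) by (metis Diff_infinite_finite finite.emptyI)
  then obtain b where "b \<in> B" "b \<notin> Range Q" "R a b"
    by blast
  with Q False \<open>a \<in> A\<close> have "finite_matching A B (insert (a, b) Q)"
    unfolding finite_matching_def single_valued_def by auto
  with \<open>R a b\<close> show ?thesis
    by (intro that[of "insert (a, b) Q"]) auto
qed (use Q in blast)

lemma finite_matching_extend_Range:
  assumes "finite_matching A B Q" and "b \<in> B" and "infinite {a\<in>A. R a b}"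
  obtains Q' where "finite_matching A B Q'" "Q \<subseteq> Q'" "\<forall>(x, y) \<in> Q' - Q. R x y" "b \<in> Range Q'"
proof -
  have "finite_matching B A (Q\<inverse>)"
    using assms(1) by (simp add: finite_matching_converse)
  then obtain Q' where "finite_matching B A Q'" "Q\<inverse> \<subseteq> Q'" "\<forall>(y, x) \<in> Q' - Q\<inverse>. R x y" "b \<in> Domain Q'"
    using finite_matching_extend_Domain[where R = "\<lambda>y x. R x y", OF _ assms(2,3)] by blast
  then have "finite_matching A B (Q'\<inverse>)" "Q \<subseteq> Q'\<inverse>" "\<forall>(x, y) \<in> Q'\<inverse> - Q. R x y" "b \<in> Range (Q'\<inverse>)"
    using finite_matching_converse[of A B Q'] by auto
  then show ?thesis
    by (rule that)
qed

lemma single_valued_UN_incseq: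
  fixes P :: "nat \<Rightarrow> ('a \<times> 'b) set"
  assumes "\<And>n. P n \<subseteq> P (Suc n)" and "\<And>n. single_valued (P n)"
  shows "single_valued (\<Union>n. P n)"
proof (rule single_valuedI)
  fix x y z assume "(x, y) \<in> (\<Union>n. P n)" "(x, z) \<in> (\<Union>n. P n)"
  then obtain i j where "(x, y) \<in> P i" "(x, z) \<in> P j"
    by blast
  moreover have "P i \<subseteq> P (max i j)" "P j \<subseteq> P (max i j)"
    by (simp_all add: assms(1) lift_Suc_mono_le)
  ultimately have "(x, y) \<in> P (max i j)" "(x, z) \<in> P (max i j)"
    by blast+
  then show "y = z"
    using assms(2) by (rule single_valuedD[rotated])
qed

lemma bij_betw_from_relation:
  assumes "single_valued H" and "single_valued (H\<inverse>)"
  obtains h where "bij_betw h (Domain H) (Range H)" and "\<And>a. a \<in> Domain H \<Longrightarrow> (a, h a) \<in> H"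
proof
  define h where "h a = (THE b. (a, b) \<in> H)" for a
  have h_eq: "h a = b" if "(a, b) \<in> H" for a b
    unfolding h_def using that
    by (rule the_equality) (use that assms(1) in \<open>blast dest: single_valuedD\<close>)
  then show graph: "(a, h a) \<in> H" if "a \<in> Domain H" for a
    using that by blast
  show "bij_betw h (Domain H) (Range H)"
    using graph h_eq assms(2) unfolding bij_betw_def inj_on_def single_valued_def by fastforce
qed

lemma bij_betw_from_matching_chain:
  fixes P :: "nat \<Rightarrow> ('a \<times> 'b) set"
  assumes "\<And>n. finite_matching A B (P n)" and "\<And>n. P n \<subseteq> P (Suc n)"
    and "A \<subseteq> (\<Union>n. Domain (P n))" and "B \<subseteq> (\<Union>n. Range (P n))"
  obtains h where "bij_betw h A B" and "\<And>a. a \<in> A \<Longrightarrow> \<exists>n. (a, h a) \<in> P n"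
proof -
  define H where "H = (\<Union>n. P n)"
  have sv: "single_valued (P n)" "single_valued ((P n)\<inverse>)" for n
    using assms(1) by (simp_all add: finite_matching_def)
  have "single_valued (\<Union>n. P n)"
    by (rule single_valued_UN_incseq) (rule assms(2), rule sv(1))
  moreover have "(P n)\<inverse> \<subseteq> (P (Suc n))\<inverse>" for n
    using assms(2) by blast
  then have "single_valued (\<Union>n. (P n)\<inverse>)"
    by (rule single_valued_UN_incseq) (rule sv(2))
  ultimately have "single_valued H" "single_valued (H\<inverse>)"
    unfolding H_def converse_UNION .
  then obtain h where h: "bij_betw h (Domain H) (Range H)" "\<And>a. a \<in> Domain H \<Longrightarrow> (a, h a) \<in> H"
    using bij_betw_from_relation by blast
  have "Domain H \<subseteq> A" "Range H \<subseteq> B"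
    using assms(1) unfolding H_def finite_matching_def by blast+
  then have "Domain H = A" "Range H = B"
    using assms(3,4) unfolding H_def Domain_Union Range_Union by auto
  with h show ?thesis
    using that unfolding H_def by blast
qed

lemma exists_exhausting_matching_chain:
  fixes R :: "nat \<Rightarrow> 'a \<Rightarrow> 'b \<Rightarrow> bool"
  assumes "countable A" and "countable B" and "A \<noteq> {}" and "B \<noteq> {}"
    and fwd: "\<And>n a. a \<in> A \<Longrightarrow> infinite {b\<in>B. R n a b}"
    and bwd: "\<And>n b. b \<in> B \<Longrightarrow> infinite {a\<in>A. R n a b}"
  obtains P where "\<And>n. finite_matching A B (P n)" and "\<And>n. P n \<subseteq> P (Suc n)"
    and "\<And>n. \<forall>(a, b) \<in> P (Suc n) - P n. R n a b"
    and "A \<subseteq> (\<Union>n. Domain (P n))" and "B \<subseteq> (\<Union>n. Range (P n))"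
proof -
  define ea where "ea = from_nat_into A"
  define eb where "eb = from_nat_into B"
  have ea: "ea k \<in> A" and eb: "eb k \<in> B" for k
    using \<open>A \<noteq> {}\<close> \<open>B \<noteq> {}\<close> by (simp_all add: ea_def eb_def from_nat_into)
  define extends where "extends n Q Q' \<longleftrightarrow> Q \<subseteq> Q' \<and> (\<forall>(a, b) \<in> Q' - Q. R n a b) \<and>
      (even n \<longrightarrow> ea (n div 2) \<in> Domain Q') \<and> (odd n \<longrightarrow> eb (n div 2) \<in> Range Q')" for n Q Q'
  have step: "\<exists>Q'. finite_matching A B Q' \<and> extends n Q Q'" if Q: "finite_matching A B Q" for n Q
  proof (cases "even n")
    case True
    obtain Q' where "finite_matching A B Q'" "Q \<subseteq> Q'" "\<forall>(a, b) \<in> Q' - Q. R n a b"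
      "ea (n div 2) \<in> Domain Q'"
      using finite_matching_extend_Domain[where R = "R n", OF Q ea fwd[OF ea]] by blast
    with True show ?thesis
      unfolding extends_def by blast
  next
    case False
    obtain Q' where "finite_matching A B Q'" "Q \<subseteq> Q'" "\<forall>(a, b) \<in> Q' - Q. R n a b"
      "eb (n div 2) \<in> Range Q'"
      using finite_matching_extend_Range[where R = "R n", OF Q eb bwd[OF eb]] by blast
    with False show ?thesis
      unfolding extends_def by blast
  qed
  have "\<exists>P. \<forall>n. finite_matching A B (P n) \<and> extends n (P n) (P (Suc n))"
  proof (rule dependent_nat_choice)
    show "\<exists>Q. finite_matching A B Q"
      by (intro exI[of _ "{}"]) (simp add: finite_matching_def)
  qed (rule step)
  then obtain P where matching: "\<And>n. finite_matching A B (P n)"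
    and "\<And>n. extends n (P n) (P (Suc n))"
    by blast
  then have mono: "\<And>n. P n \<subseteq> P (Suc n)" and new: "\<And>n. \<forall>(a, b) \<in> P (Suc n) - P n. R n a b"
    and even: "\<And>n. even n \<Longrightarrow> ea (n div 2) \<in> Domain (P (Suc n))"
    and odd: "\<And>n. odd n \<Longrightarrow> eb (n div 2) \<in> Range (P (Suc n))"
    unfolding extends_def by blast+
  have "A \<subseteq> (\<Union>n. Domain (P n))"
  proof
    fix a assume "a \<in> A"
    then obtain k where "a = ea k"
      using \<open>countable A\<close> by (metis ea_def from_nat_into_surj)
    then show "a \<in> (\<Union>n. Domain (P n))"
      using even[of "2 * k"] by auto
  qed
  moreover have "B \<subseteq> (\<Union>n. Range (P n))"
  proof
    fix b assume "b \<in> B"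
    then obtain k where "b = eb k"
      using \<open>countable B\<close> by (metis eb_def from_nat_into_surj)
    then show "b \<in> (\<Union>n. Range (P n))"
      using odd[of "Suc (2 * k)"] by auto
  qed
  ultimately show ?thesis
    by (rule that[OF matching mono new])
qed

lemma incseq_mem_or_added_later:
  fixes P :: "nat \<Rightarrow> 'c set"
  assumes mono: "\<And>n. P n \<subseteq> P (Suc n)" and new: "\<And>n. \<forall>x \<in> P (Suc n) - P n. Q n x"
    and antimono: "\<And>m n x. m \<le> n \<Longrightarrow> Q n x \<Longrightarrow> Q m x"
    and "x \<in> P m"
  shows "x \<in> P n \<or> Q n x"
  using \<open>x \<in> P m\<close>
proof (induction m)
  case 0
  then show ?case
    using lift_Suc_mono_le[of P, OF mono, of 0 n] by blast
next
  case (Suc m)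
  show ?case
  proof (cases "x \<in> P m")
    case False
    then have "Q m x"
      using Suc.prems new by blast
    show ?thesis
    proof (cases "m < n")
      case True
      then show ?thesis
        using lift_Suc_mono_le[of P, OF mono, of "Suc m" n] Suc.prems by auto
    next
      case False
      then show ?thesis
        using antimono[of n m] \<open>Q m x\<close> by simp
    qed
  qed (fact Suc.IH)
qed

lemma back_and_forth_bij:
  fixes R :: "nat \<Rightarrow> 'a \<Rightarrow> 'b \<Rightarrow> bool"
  assumes "countable A" and "countable B"
    and fwd: "\<And>n a. a \<in> A \<Longrightarrow> infinite {b\<in>B. R n a b}"
    and bwd: "\<And>n b. b \<in> B \<Longrightarrow> infinite {a\<in>A. R n a b}"
    and antimono: "\<And>m n a b. m \<le> n \<Longrightarrow> R n a b \<Longrightarrow> R m a b"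
  obtains h where "bij_betw h A B" and "\<And>n. finite {a\<in>A. \<not> R n a (h a)}"
proof (cases "A = {}")
  case True
  then have "B = {}"
    using bwd by fastforce
  with True show ?thesis
    using that[of "\<lambda>_. undefined"] by (simp add: bij_betw_def)
next
  case False
  then have "B \<noteq> {}"
    using fwd by fastforce
  show ?thesis
  proof (rule exists_exhausting_matching_chain[where R = R, OF assms(1,2) False \<open>B \<noteq> {}\<close> fwd bwd])
    fix P assume matching: "\<And>n. finite_matching A B (P n)" and mono: "\<And>n. P n \<subseteq> P (Suc n)"
      and new: "\<And>n. \<forall>(a, b) \<in> P (Suc n) - P n. R n a b"
      and "A \<subseteq> (\<Union>n. Domain (P n))" and "B \<subseteq> (\<Union>n. Range (P n))"
    then obtain h where h: "bij_betw h A B" "\<And>a. a \<in> A \<Longrightarrow> \<exists>m. (a, h a) \<in> P m"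
      using bij_betw_from_matching_chain[of A B P] by blast
    have late: "(a, b) \<in> P n \<or> R n a b" if "(a, b) \<in> P m" for a b m n
      using incseq_mem_or_added_later[of P "\<lambda>n (a, b). R n a b", OF mono new _ that]
      by (simp add: antimono split: prod.splits)
    have "finite {a\<in>A. \<not> R n a (h a)}" for n
    proof (rule finite_subset)
      show "{a\<in>A. \<not> R n a (h a)} \<subseteq> Domain (P n)"
        using h(2) late by blast
      show "finite (Domain (P n))"
        using matching by (simp add: finite_matching_def finite_Domain)
    qed
    with h(1) show ?thesis
      by (rule that)
  qed
qed

section \<open>Reindexing free modules\<close>

definition reindex :: "'a set \<Rightarrow> ('a \<Rightarrow> 'b) \<Rightarrow> ('b \<Rightarrow> 'r::ring_1) \<Rightarrow> ('a \<Rightarrow> 'r)" where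
  "reindex A k y = (\<lambda>a. if a \<in> A then y (k a) else 0)"

lemma reindex_in_free_mod:
  assumes "inj_on k A" and "y \<in> free_mod B"
  shows "reindex A k y \<in> free_mod A"
proof -
  have "finite (k -` {b. y b \<noteq> 0} \<inter> A)"
    using assms by (intro finite_vimage_IntI) (auto simp: free_mod_def)
  moreover have "{a. reindex A k y a \<noteq> 0} = k -` {b. y b \<noteq> 0} \<inter> A"
    by (auto simp: reindex_def)
  ultimately show ?thesis
    unfolding free_mod_def by auto
qed

lemma rlinear_reindex: "inj_on k A \<Longrightarrow> rlinear B A (reindex A k)"
  unfolding rlinear_def by (auto simp: reindex_in_free_mod) (auto simp: reindex_def)

lemma reindex_reindex:
  assumes "\<And>a. a \<in> A \<Longrightarrow> h a \<in> B \<and> g (h a) = a" and "x \<in> free_mod A"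
  shows "reindex A h (reindex B g x) = x"
proof
  fix a
  show "reindex A h (reindex B g x) a = x a"
    using assms unfolding free_mod_def by (cases "a \<in> A") (auto simp: reindex_def)
qed

lemma carr_reindex_bvec: "carr (reindex A k (bvec b)) \<subseteq> {a\<in>A. k a = b}"
  by (auto simp: carr_def reindex_def bvec_def split: if_splits)

lemma reindex_reindex_inv_into:
  assumes "bij_betw h A B" and "x \<in> free_mod A"
  shows "reindex A h (reindex B (inv_into A h) x) = x"
  using assms by (intro reindex_reindex) (auto simp: bij_betw_def)

lemma reindex_inv_into_reindex:
  assumes "bij_betw h A B" and "y \<in> free_mod B"
  shows "reindex B (inv_into A h) (reindex A h y) = y"
  using assms by (intro reindex_reindex) (auto simp: bij_betw_def inv_into_into f_inv_into_f)

lemma mod_iso_if_bij_betw: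
  assumes "bij_betw h A B"
  shows "mod_iso TYPE('r::ring_1) A B"
  unfolding mod_iso_def
proof (intro exI conjI)
  show "rlinear A B (reindex B (inv_into A h) :: ('a \<Rightarrow> 'r) \<Rightarrow> _)"
    using assms by (simp add: rlinear_reindex bij_betw_def inj_on_inv_into)
  show "rlinear B A (reindex A h)"
    using assms by (simp add: rlinear_reindex bij_betw_def)
qed (simp_all add: assms reindex_reindex_inv_into reindex_inv_into_reindex)

lemma bvec_in_free_mod: "a \<in> A \<Longrightarrow> bvec a \<in> free_mod A"
  by (simp add: free_mod_def bvec_def)

lemma rlinear_zero:
  assumes "rlinear A B \<phi>"
  shows "\<phi> (\<lambda>_. 0) = (\<lambda>_. 0)"
proof -
  have "\<And>x r. x \<in> free_mod A \<Longrightarrow> \<phi> (\<lambda>a. x a * r) = (\<lambda>b. \<phi> x b * r)"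
    using assms by (simp add: rlinear_def)
  from this[of "\<lambda>_. 0" 0] show ?thesis
    by (simp add: free_mod_def)
qed

lemma bvec_image_nonzero:
  assumes "rlinear B A \<psi>" and "\<forall>x\<in>free_mod A. \<psi> (\<phi> x) = x" and "a \<in> A"
  shows "\<phi> (bvec a :: 'a \<Rightarrow> 'r::ring_1) \<noteq> (\<lambda>_. 0)"
proof
  assume "\<phi> (bvec a) = (\<lambda>_. 0)"
  then have "bvec a = (\<lambda>_. 0 :: 'r)"
    using assms bvec_in_free_mod rlinear_zero by metis
  then show False
    by (metis bvec_def zero_neq_one)
qed

section \<open>Supports of free controlled modules\<close>

lemma free_controlled_image_subset:
  "free_controlled X E A \<alpha> \<Longrightarrow> \<alpha> ` A \<subseteq> topspace X - E"
  unfolding free_controlled_def by (rule conjunct1)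

lemma free_controlled_finite_preimage:
  assumes "free_controlled X E A \<alpha>" and "compactin X K" and "K \<subseteq> topspace X - E"
  shows "finite {a\<in>A. \<alpha> a \<in> K}"
  using assms unfolding free_controlled_def by (simp add: compactin_subtopology)

lemma controlled_hom_support_subset:
  assumes hom: "controlled_hom X E A \<alpha> B \<beta> \<phi>" and "free_controlled X E B \<beta>"
    and nonzero: "\<And>a. a \<in> A \<Longrightarrow> \<phi> (bvec a) \<noteq> (\<lambda>_. 0)"
  shows "fc_support X A \<alpha> \<inter> E \<subseteq> fc_support X B \<beta>"
proof
  fix x assume x: "x \<in> fc_support X A \<alpha> \<inter> E"
  show "x \<in> fc_support X B \<beta>"
  proof (rule ccontr)
    assume "x \<notin> fc_support X B \<beta>"
    moreover have "x \<in> topspace X" "x \<notin> \<beta> ` B"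
      using x free_controlled_image_subset[OF assms(2)]
      by (auto simp: fc_support_def in_derived_set_of)
    ultimately obtain T where T: "openin X T" "x \<in> T" "T \<inter> \<beta> ` B = {}"
      unfolding fc_support_def in_derived_set_of by auto
    then have "nbhd_in X T x"
      by (auto simp: nbhd_in_def openin_subset)
    then obtain V where V: "nbhd_in X V x" "\<forall>a\<in>A. \<alpha> a \<in> V \<longrightarrow> \<beta> ` carr (\<phi> (bvec a)) \<subseteq> T"
      using hom x unfolding controlled_hom_def by (meson IntD2)
    then obtain W where W: "openin X W" "x \<in> W" "W \<subseteq> V"
      unfolding nbhd_in_def by blast
    have "x \<in> X derived_set_of (\<alpha> ` A)"
      using x by (simp add: fc_support_def)
    then have "\<exists>y\<noteq>x. y \<in> \<alpha> ` A \<and> y \<in> W"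
      using W(1,2) unfolding in_derived_set_of by blast
    then obtain a where a: "a \<in> A" "\<alpha> a \<in> W"
      by blast
    have "\<phi> (bvec a) \<in> free_mod B"
      using hom a(1) by (simp add: controlled_hom_def rlinear_def bvec_in_free_mod)
    then have "carr (\<phi> (bvec a)) \<subseteq> B"
      by (simp add: free_mod_def carr_def)
    moreover have "\<beta> ` carr (\<phi> (bvec a)) \<subseteq> T"
      using V(2) a W(3) by blast
    ultimately have "carr (\<phi> (bvec a)) = {}"
      using T(3) by blast
    then have "\<phi> (bvec a) = (\<lambda>_. 0)"
      by (auto simp: carr_def)
    then show False
      using nonzero[OF a(1)] by blast
  qed
qed

lemma controlled_hom_of_finite:
  assumes "t1_space X" and fc: "free_controlled X E A \<alpha>" and "finite A" and "rlinear A B \<phi>"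
  shows "controlled_hom X E A \<alpha> B \<beta> \<phi>"
  unfolding controlled_hom_def
proof (intro conjI ballI allI impI)
  fix x U assume "x \<in> E" and "nbhd_in X U x"
  then obtain W where W: "openin X W" "x \<in> W" "W \<subseteq> U"
    unfolding nbhd_in_def by blast
  have "finite (\<alpha> ` A)" and "\<alpha> ` A \<subseteq> topspace X"
    using assms free_controlled_image_subset[OF fc] by auto
  then have "closedin X (\<alpha> ` A)"
    using \<open>t1_space X\<close> t1_space_closedin_finite by blast
  then have "openin X (W - \<alpha> ` A)"
    using W(1) by blast
  moreover have "x \<notin> \<alpha> ` A"
    using \<open>x \<in> E\<close> free_controlled_image_subset[OF fc] by blast
  ultimately show "\<exists>V. nbhd_in X V x \<and> V \<subseteq> U \<and> (\<forall>a\<in>A. \<alpha> a \<in> V \<longrightarrow> \<beta> ` carr (\<phi> (bvec a)) \<subseteq> U)"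
    using W by (intro exI[of _ "W - \<alpha> ` A"]) (auto simp: nbhd_in_def openin_subset)
qed (fact assms)

lemma free_controlled_finite_if_finite_image:
  assumes fc: "free_controlled X E A \<alpha>" and "N \<subseteq> A" and "finite (\<alpha> ` N)"
  shows "finite N"
proof -
  have "\<alpha> ` N \<subseteq> topspace X - E"
    using free_controlled_image_subset[OF fc] \<open>N \<subseteq> A\<close> by blast
  then have "finite {a\<in>A. \<alpha> a \<in> \<alpha> ` N}"
    using \<open>finite (\<alpha> ` N)\<close>
    by (intro free_controlled_finite_preimage[OF fc] finite_imp_compactin) auto
  moreover have "N \<subseteq> {a\<in>A. \<alpha> a \<in> \<alpha> ` N}"
    using \<open>N \<subseteq> A\<close> by blast
  ultimately show ?thesis
    using finite_subset by blast
qed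

context Metric_space
begin

lemma compactin_cluster_point:
  assumes "compactin mtopology C" and "infinite N" and "f ` N \<subseteq> C"
  obtains z where "z \<in> C" and "\<And>r. r > 0 \<Longrightarrow> infinite {i\<in>N. f i \<in> mball z r}"
proof (cases "finite (f ` N)")
  case True
  then obtain i where "i \<in> N" and "infinite {j\<in>N. f j = f i}"
    using pigeonhole_infinite[OF \<open>infinite N\<close>] by blast
  moreover have "f i \<in> M"
    using \<open>i \<in> N\<close> assms(1,3) compactin_subset_topspace by fastforce
  then have "{j\<in>N. f j = f i} \<subseteq> {j\<in>N. f j \<in> mball (f i) r}" if "r > 0" for r
    using that by auto
  ultimately show ?thesis
    using that[of "f i"] assms(3) by (meson finite_subset image_subset_iff)
next
  case False
  then obtain z where "z \<in> C" and z: "z \<in> mtopology derived_set_of (f ` N)"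
    using compactin_imp_Bolzano_Weierstrass[OF assms(1)] assms(3) by blast
  have "infinite {i\<in>N. f i \<in> mball z r}" if "r > 0" for r
  proof
    assume "finite {i\<in>N. f i \<in> mball z r}"
    moreover have "f ` N \<inter> mball z r \<subseteq> f ` {i\<in>N. f i \<in> mball z r}"
      by blast
    ultimately have "finite (f ` N \<inter> mball z r)"
      using finite_surj by blast
    then show False
      using z that unfolding derived_set_of_infinite_mball by blast
  qed
  with \<open>z \<in> C\<close> show ?thesis
    by (rule that)
qed

lemma cluster_point_in_closed:
  assumes K: "closedin mtopology K"
    and far: "\<And>\<epsilon>. \<epsilon> > 0 \<Longrightarrow> finite {i\<in>I. \<forall>k\<in>K. \<epsilon> \<le> d (f i) k}"
    and "z \<in> M" and near: "\<And>r. r > 0 \<Longrightarrow> infinite {i\<in>I. f i \<in> mball z r}"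
  shows "z \<in> K"
proof (rule ccontr)
  assume "z \<notin> K"
  moreover have "openin mtopology (M - K)"
    using K by (simp add: closedin_def)
  ultimately obtain r where "r > 0" and r: "mball z r \<subseteq> M - K"
    using \<open>z \<in> M\<close> unfolding openin_mtopology by blast
  have "infinite ({i\<in>I. f i \<in> mball z (r/2)} - {i\<in>I. \<forall>k\<in>K. r/2 \<le> d (f i) k})"
    using near[of "r/2"] far[of "r/2"] \<open>r > 0\<close> by (simp add: Diff_infinite_finite)
  then obtain i where "f i \<in> mball z (r/2)" and "\<not> (\<forall>k\<in>K. r/2 \<le> d (f i) k)"
    using infinite_imp_nonempty by blast
  then obtain k where "f i \<in> mball z (r/2)" and "k \<in> K" and "d (f i) k < r/2"
    by (auto simp: not_le)
  moreover have "k \<in> M"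
    using \<open>k \<in> K\<close> K closedin_subset by fastforce
  ultimately have "d z k < r"
    using triangle[of z "f i" k] by auto
  then show False
    using r \<open>k \<in> K\<close> \<open>k \<in> M\<close> \<open>z \<in> M\<close> by auto
qed

lemma finite_far_if_cluster_points_in:
  assumes "compact_space mtopology" and "f ` I \<subseteq> M"
    and cluster: "\<And>z. z \<in> M \<Longrightarrow> (\<And>r. r > 0 \<Longrightarrow> infinite {i\<in>I. f i \<in> mball z r}) \<Longrightarrow> z \<in> S"
    and "\<epsilon> > 0"
  shows "finite {i\<in>I. \<forall>s\<in>S. \<epsilon> \<le> d (f i) s}" (is "finite ?N")
proof (rule ccontr)
  assume "infinite ?N"
  moreover have "compactin mtopology M"
    using assms(1) by (simp add: compact_space_def)
  ultimately obtain z where "z \<in> M" and near: "\<And>r. r > 0 \<Longrightarrow> infinite {i\<in>?N. f i \<in> mball z r}"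
    using compactin_cluster_point[of M ?N f] assms(2) by blast
  have "z \<in> S"
  proof (rule cluster[OF \<open>z \<in> M\<close>])
    fix r :: real assume "r > 0"
    have "{i\<in>?N. f i \<in> mball z r} \<subseteq> {i\<in>I. f i \<in> mball z r}"
      by blast
    then show "infinite {i\<in>I. f i \<in> mball z r}"
      using near[OF \<open>r > 0\<close>] by (rule infinite_super)
  qed
  obtain i where "i \<in> ?N" "f i \<in> mball z \<epsilon>"
    using infinite_imp_nonempty[OF near[OF \<open>\<epsilon> > 0\<close>]] by blast
  then show False
    using \<open>z \<in> S\<close> commute[of z "f i"] by force
qed

lemma cluster_point_in_fc_support:
  assumes fc: "free_controlled mtopology E A \<alpha>" and "z \<in> M"
    and near: "\<And>r. r > 0 \<Longrightarrow> infinite {a\<in>A. \<alpha> a \<in> mball z r}"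
  shows "z \<in> fc_support mtopology A \<alpha>"
proof -
  have "infinite (\<alpha> ` A \<inter> mball z r)" if "r > 0" for r
  proof
    assume "finite (\<alpha> ` A \<inter> mball z r)"
    moreover have "\<alpha> ` {a\<in>A. \<alpha> a \<in> mball z r} = \<alpha> ` A \<inter> mball z r"
      by blast
    ultimately have "finite {a\<in>A. \<alpha> a \<in> mball z r}"
      using free_controlled_finite_if_finite_image[OF fc]
      by (metis (no_types, lifting) mem_Collect_eq subsetI)
    then show False
      using near[OF that] by blast
  qed
  then show ?thesis
    using \<open>z \<in> M\<close> by (simp add: fc_support_def derived_set_of_infinite_mball)
qed

lemma fc_support_subset:
  assumes "compact_space mtopology" and fc: "free_controlled mtopology E A \<alpha>"
    and "closedin mtopology E"
  shows "fc_support mtopology A \<alpha> \<subseteq> E"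
proof
  fix y assume y: "y \<in> fc_support mtopology A \<alpha>"
  then have "y \<in> M"
    by (simp add: fc_support_def derived_set_of_infinite_mcball)
  show "y \<in> E"
  proof (rule ccontr)
    assume "y \<notin> E"
    moreover have "openin mtopology (M - E)"
      using assms(3) by (simp add: closedin_def)
    ultimately obtain r where "r > 0" and r: "mball y r \<subseteq> M - E"
      using \<open>y \<in> M\<close> unfolding openin_mtopology by blast
    have "mcball y (r/2) \<subseteq> M - E"
      using r \<open>r > 0\<close> mcball_subset_mball_concentric[of "r/2" r y] by auto
    moreover have "compactin mtopology (mcball y (r/2))"
      using assms(1) closedin_compact_space closedin_mcball by blast
    ultimately have "finite {a\<in>A. \<alpha> a \<in> mcball y (r/2)}"
      using free_controlled_finite_preimage[OF fc] by (metis topspace_mtopology)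
    then have "finite (\<alpha> ` A \<inter> mcball y (r/2))"
      by (rule finite_surj) blast
    then show False
      using y \<open>r > 0\<close> by (simp add: fc_support_def derived_set_of_infinite_mcball)
  qed
qed

lemma finite_far_from_fc_support:
  assumes "compact_space mtopology" and fc: "free_controlled mtopology E A \<alpha>"
    and "fc_support mtopology A \<alpha> \<subseteq> S" and "\<epsilon> > 0"
  shows "finite {a\<in>A. \<forall>s\<in>S. \<epsilon> \<le> d (\<alpha> a) s}"
proof (rule finite_far_if_cluster_points_in[OF assms(1) _ _ \<open>\<epsilon> > 0\<close>])
  show "\<alpha> ` A \<subseteq> M"
    using free_controlled_image_subset[OF fc] by auto
qed (use cluster_point_in_fc_support[OF fc] assms(3) in blast)

lemma free_controlled_countable:
  assumes "compact_space mtopology" and fc: "free_controlled mtopology E A \<alpha>"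
    and "closedin mtopology E"
  shows "countable A"
proof -
  have "A \<subseteq> (\<Union>n. {a\<in>A. \<forall>e\<in>E. 1 / Suc n \<le> d (\<alpha> a) e})"
  proof
    fix a assume "a \<in> A"
    then have "\<alpha> a \<in> M - E"
      using free_controlled_image_subset[OF fc] by auto
    moreover have "openin mtopology (M - E)"
      using assms(3) by (simp add: closedin_def)
    ultimately obtain r where "r > 0" and r: "mball (\<alpha> a) r \<subseteq> M - E"
      unfolding openin_mtopology by blast
    obtain n where "inverse (Suc n) < r"
      using reals_Archimedean[OF \<open>r > 0\<close>] by blast
    then have "1 / Suc n \<le> d (\<alpha> a) e" if "e \<in> E" for e
      using r that \<open>\<alpha> a \<in> M - E\<close> assms(3) closedin_subset
      by (fastforce simp: inverse_eq_divide)
    with \<open>a \<in> A\<close> show "a \<in> (\<Union>n. {a\<in>A. \<forall>e\<in>E. 1 / Suc n \<le> d (\<alpha> a) e})"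
      by blast
  qed
  moreover have "finite {a\<in>A. \<forall>e\<in>E. 1 / Suc n \<le> d (\<alpha> a) e}" for n
    using finite_far_from_fc_support[OF assms(1) fc fc_support_subset[OF assms]] by simp
  then have "countable (\<Union>n. {a\<in>A. \<forall>e\<in>E. 1 / Suc n \<le> d (\<alpha> a) e})"
    by (simp add: countable_finite)
  ultimately show ?thesis
    by (rule countable_subset)
qed

lemma fc_support_nonempty_iff:
  assumes "compact_space mtopology" and fc: "free_controlled mtopology E A \<alpha>"
  shows "fc_support mtopology A \<alpha> \<noteq> {} \<longleftrightarrow> infinite A"
proof
  assume "fc_support mtopology A \<alpha> \<noteq> {}"
  then show "infinite A"
    using t1_space_mtopology unfolding t1_space_derived_set_of_finite fc_support_def by blast
next
  assume "infinite A"
  moreover have "compactin mtopology M" "\<alpha> ` A \<subseteq> M"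
    using assms(1) free_controlled_image_subset[OF fc] by (auto simp: compact_space_def)
  ultimately obtain z where "z \<in> M" "\<And>r. r > 0 \<Longrightarrow> infinite {a\<in>A. \<alpha> a \<in> mball z r}"
    using compactin_cluster_point by metis
  then show "fc_support mtopology A \<alpha> \<noteq> {}"
    using cluster_point_in_fc_support[OF fc] by blast
qed

section \<open>Isomorphisms between modules with equal supports\<close>

lemma exists_almost_nearest:
  assumes "L \<noteq> {}" and "\<eta> > 0"
  obtains l where "l \<in> L" and "\<And>l'. l' \<in> L \<Longrightarrow> d p l < d p l' + \<eta>"
proof -
  have "bdd_below ((\<lambda>l. d p l) ` L)"
    by (rule bdd_belowI[of _ 0]) auto
  moreover have "Inf ((\<lambda>l. d p l) ` L) < Inf ((\<lambda>l. d p l) ` L) + \<eta>"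
    using \<open>\<eta> > 0\<close> by simp
  ultimately have "\<exists>x\<in>(\<lambda>l. d p l) ` L. x < Inf ((\<lambda>l. d p l) ` L) + \<eta>"
    using cInf_less_iff \<open>L \<noteq> {}\<close> by (metis image_is_empty)
  then obtain l where "l \<in> L" "d p l < Inf ((\<lambda>l. d p l) ` L) + \<eta>"
    by blast
  moreover have "Inf ((\<lambda>l. d p l) ` L) \<le> d p l'" if "l' \<in> L" for l'
    using \<open>bdd_below _\<close> that by (simp add: cInf_lower)
  ultimately show ?thesis
    using that by fastforce
qed

lemma infinite_close_partners:
  assumes "L \<noteq> {}" and L: "L \<subseteq> fc_support mtopology B \<beta>" and "p \<in> M" and "r > 0"
  shows "infinite {b\<in>B. \<forall>l\<in>L. d p (\<beta> b) \<le> d p l + r}"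
proof -
  obtain l0 where "l0 \<in> L" and l0: "\<And>l. l \<in> L \<Longrightarrow> d p l0 < d p l + r/2"
    using exists_almost_nearest[OF \<open>L \<noteq> {}\<close>, of "r/2" p] \<open>r > 0\<close> by auto
  then have "l0 \<in> M" and "infinite (\<beta> ` B \<inter> mball l0 (r/2))"
    using L \<open>r > 0\<close> by (auto simp: fc_support_def derived_set_of_infinite_mball)
  moreover have "\<beta> ` B \<inter> mball l0 (r/2) = \<beta> ` {b\<in>B. \<beta> b \<in> mball l0 (r/2)}"
    by blast
  ultimately have "infinite {b\<in>B. \<beta> b \<in> mball l0 (r/2)}"
    by (metis finite_imageI)
  moreover have "{b\<in>B. \<beta> b \<in> mball l0 (r/2)} \<subseteq> {b\<in>B. \<forall>l\<in>L. d p (\<beta> b) \<le> d p l + r}"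
  proof safe
    fix b l assume "b \<in> B" "\<beta> b \<in> mball l0 (r/2)" "l \<in> L"
    then have "d p (\<beta> b) \<le> d p l0 + d l0 (\<beta> b)" "d l0 (\<beta> b) < r/2"
      using triangle[OF \<open>p \<in> M\<close> \<open>l0 \<in> M\<close>] by auto
    then show "d p (\<beta> b) \<le> d p l + r"
      using l0[OF \<open>l \<in> L\<close>] by linarith
  qed
  ultimately show ?thesis
    using infinite_super by blast
qed

lemma exists_close_bij:
  assumes cs: "compact_space mtopology" and "closedin mtopology E"
    and fcA: "free_controlled mtopology E A \<alpha>" and fcB: "free_controlled mtopology E B \<beta>"
    and same: "fc_support mtopology A \<alpha> = fc_support mtopology B \<beta>"
    and "fc_support mtopology A \<alpha> \<noteq> {}"
  obtains h where "bij_betw h A B" and "\<And>\<epsilon>. \<epsilon> > 0 \<Longrightarrow> finite {a\<in>A. \<epsilon> \<le> d (\<alpha> a) (\<beta> (h a))}"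
proof -
  define L where "L = fc_support mtopology A \<alpha>"
  have "L \<noteq> {}" and LA: "fc_support mtopology A \<alpha> = L" and LB: "fc_support mtopology B \<beta> = L"
    using assms(6) same by (simp_all add: L_def)
  have \<alpha>M: "\<alpha> a \<in> M" if "a \<in> A" for a
    using free_controlled_image_subset[OF fcA] that by auto
  have \<beta>M: "\<beta> b \<in> M" if "b \<in> B" for b
    using free_controlled_image_subset[OF fcB] that by auto
  \<comment> \<open>if q is near p but d p q is large, then p is far from L; so paired points end up close\<close>
  define near where "near n p q \<longleftrightarrow> (\<forall>l\<in>L. d p q \<le> d p l + 1 / Suc n)" for n p q
  have near_antimono: "near m p q" if "m \<le> n" and "near n p q" for m n p q
  proof -
    have "1 / real (Suc n) \<le> 1 / Suc m"
      using that(1) by (simp add: frac_le)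
    then show ?thesis
      using that(2) unfolding near_def by force
  qed
  obtain h where h: "bij_betw h A B"
    and h_near: "\<And>n. finite {a\<in>A. \<not> (near n (\<alpha> a) (\<beta> (h a)) \<or> near n (\<beta> (h a)) (\<alpha> a))}"
  proof (rule back_and_forth_bij[where R = "\<lambda>n a b. near n (\<alpha> a) (\<beta> b) \<or> near n (\<beta> b) (\<alpha> a)"])
    show "countable A" "countable B"
      using free_controlled_countable[OF cs _ assms(2)] fcA fcB by blast+
    show "infinite {b\<in>B. near n (\<alpha> a) (\<beta> b) \<or> near n (\<beta> b) (\<alpha> a)}" if "a \<in> A" for n a
    proof (rule infinite_super)
      show "infinite {b\<in>B. near n (\<alpha> a) (\<beta> b)}"
        unfolding near_def
        by (rule infinite_close_partners[OF \<open>L \<noteq> {}\<close> LB[THEN equalityD2] \<alpha>M[OF that]]) simp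
    qed blast
    show "infinite {a\<in>A. near n (\<alpha> a) (\<beta> b) \<or> near n (\<beta> b) (\<alpha> a)}" if "b \<in> B" for n b
    proof (rule infinite_super)
      show "infinite {a\<in>A. near n (\<beta> b) (\<alpha> a)}"
        unfolding near_def
        by (rule infinite_close_partners[OF \<open>L \<noteq> {}\<close> LA[THEN equalityD2] \<beta>M[OF that]]) simp
    qed blast
    show "near m (\<alpha> a) (\<beta> b) \<or> near m (\<beta> b) (\<alpha> a)"
      if "m \<le> n" and "near n (\<alpha> a) (\<beta> b) \<or> near n (\<beta> b) (\<alpha> a)" for m n a b
      using that near_antimono by blast
  qed blast
  have "finite {a\<in>A. \<epsilon> \<le> d (\<alpha> a) (\<beta> (h a))}" if "\<epsilon> > 0" for \<epsilon>
  proof -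
    obtain N :: nat where "inverse (Suc N) < \<epsilon>/2"
      using reals_Archimedean \<open>\<epsilon> > 0\<close> half_gt_zero by blast
    then have far: "\<forall>l\<in>L. \<epsilon>/2 \<le> d p l" if "near N p q" and "\<epsilon> \<le> d p q" for p q
      using that unfolding near_def by (fastforce simp: inverse_eq_divide)
    define farA where "farA = {a\<in>A. \<forall>l\<in>L. \<epsilon>/2 \<le> d (\<alpha> a) l}"
    define farB where "farB = {b\<in>B. \<forall>l\<in>L. \<epsilon>/2 \<le> d (\<beta> b) l}"
    have "{a\<in>A. \<epsilon> \<le> d (\<alpha> a) (\<beta> (h a))} \<subseteq>
        {a\<in>A. \<not> (near N (\<alpha> a) (\<beta> (h a)) \<or> near N (\<beta> (h a)) (\<alpha> a))} \<union> farA \<union> (h -` farB \<inter> A)"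
      using far h commute unfolding farA_def farB_def bij_betw_def by fastforce
    moreover have "finite farA"
      unfolding farA_def using \<open>\<epsilon> > 0\<close>
      by (intro finite_far_from_fc_support[OF cs fcA LA[THEN equalityD1]]) simp
    moreover have "finite farB"
      unfolding farB_def using \<open>\<epsilon> > 0\<close>
      by (intro finite_far_from_fc_support[OF cs fcB LB[THEN equalityD1]]) simp
    moreover have "finite (h -` farB \<inter> A)"
      using \<open>finite farB\<close> h by (simp add: bij_betw_def finite_vimage_IntI)
    ultimately show ?thesis
      using h_near[of N] by (meson finite_Un finite_subset)
  qed
  with h show ?thesis
    by (rule that)
qed

lemma controlled_hom_if_close:
  assumes fc: "free_controlled mtopology E A \<alpha>" and "\<beta> ` B \<subseteq> M" and "rlinear A B \<phi>"
    and "k ` A \<subseteq> B" and carr: "\<And>a. a \<in> A \<Longrightarrow> carr (\<phi> (bvec a)) \<subseteq> {k a}"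
    and close: "\<And>\<epsilon>. \<epsilon> > 0 \<Longrightarrow> finite {a\<in>A. \<epsilon> \<le> d (\<alpha> a) (\<beta> (k a))}"
  shows "controlled_hom mtopology E A \<alpha> B \<beta> \<phi>"
  unfolding controlled_hom_def
proof (intro conjI ballI allI impI)
  fix x U assume "x \<in> E" and "nbhd_in mtopology U x"
  then obtain W where "openin mtopology W" "x \<in> W" "W \<subseteq> U"
    unfolding nbhd_in_def by blast
  then obtain r where "r > 0" and r: "mball x r \<subseteq> U"
    unfolding openin_mtopology by blast
  \<comment> \<open>remove the finitely many points whose partner is far away\<close>
  define F where "F = \<alpha> ` {a\<in>A. r/2 \<le> d (\<alpha> a) (\<beta> (k a))}"
  have "finite F"
    using close[of "r/2"] \<open>r > 0\<close> unfolding F_def by simp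
  moreover have "F \<subseteq> \<alpha> ` A"
    unfolding F_def by blast
  then have "F \<subseteq> M - E"
    using free_controlled_image_subset[OF fc] by (metis topspace_mtopology subset_trans)
  ultimately have "closedin mtopology F"
    by (intro closedin_Hausdorff_finite[OF Hausdorff_space_mtopology]) auto
  then have "openin mtopology (mball x (r/2) - F)"
    by (simp add: openin_diff)
  moreover have "x \<in> mball x (r/2) - F"
    using \<open>x \<in> E\<close> \<open>F \<subseteq> M - E\<close> \<open>openin mtopology W\<close> \<open>x \<in> W\<close> \<open>r > 0\<close> openin_subset by fastforce
  moreover have "\<beta> ` carr (\<phi> (bvec a)) \<subseteq> U" if "a \<in> A" "\<alpha> a \<in> mball x (r/2) - F" for a
  proof -
    have "d (\<alpha> a) (\<beta> (k a)) < r/2" "d x (\<alpha> a) < r/2" "x \<in> M" "\<alpha> a \<in> M"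
      using that unfolding F_def by auto
    moreover have "\<beta> (k a) \<in> M"
      using assms(2,4) that(1) by blast
    ultimately have "\<beta> (k a) \<in> mball x r"
      using triangle[of x "\<alpha> a" "\<beta> (k a)"] by simp
    then show ?thesis
      using carr[OF that(1)] r by blast
  qed
  ultimately show "\<exists>V. nbhd_in mtopology V x \<and> V \<subseteq> U \<and> (\<forall>a\<in>A. \<alpha> a \<in> V \<longrightarrow> \<beta> ` carr (\<phi> (bvec a)) \<subseteq> U)"
    using r mball_subset_concentric[of "r/2" r x] \<open>r > 0\<close>
    by (intro exI[of _ "mball x (r/2) - F"]) (auto simp: nbhd_in_def openin_subset)
qed (fact assms(3))

lemma controlled_iso_if_close_bij:
  fixes A :: "'i set" and B :: "'j set"
  assumes fcA: "free_controlled mtopology E A \<alpha>" and fcB: "free_controlled mtopology E B \<beta>"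
    and h: "bij_betw h A B" and close: "\<And>\<epsilon>. \<epsilon> > 0 \<Longrightarrow> finite {a\<in>A. \<epsilon> \<le> d (\<alpha> a) (\<beta> (h a))}"
  shows "controlled_iso TYPE('r::ring_1) mtopology E A \<alpha> B \<beta>"
proof -
  define h' where "h' = inv_into A h"
  have h': "bij_betw h' B A"
    unfolding h'_def using h by (rule bij_betw_inv_into)
  have hh': "h (h' b) = b" if "b \<in> B" for b
    unfolding h'_def using h that by (meson bij_betw_inv_into_right)
  have h'h: "h' (h a) = a" if "a \<in> A" for a
    unfolding h'_def using h that by (meson bij_betw_inv_into_left)
  have "controlled_hom mtopology E A \<alpha> B \<beta> (reindex B h' :: ('i \<Rightarrow> 'r) \<Rightarrow> _)"
  proof (rule controlled_hom_if_close[where k = h])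
    show "carr (reindex B h' (bvec a :: 'i \<Rightarrow> 'r)) \<subseteq> {h a}" for a
      using carr_reindex_bvec[of B h' a] hh' by fastforce
  qed (use fcA close free_controlled_image_subset[OF fcB] h h'
      in \<open>auto simp: bij_betw_def rlinear_reindex\<close>)
  moreover have "controlled_hom mtopology E B \<beta> A \<alpha> (reindex A h :: ('j \<Rightarrow> 'r) \<Rightarrow> _)"
  proof (rule controlled_hom_if_close[where k = h'])
    show "carr (reindex A h (bvec b :: 'j \<Rightarrow> 'r)) \<subseteq> {h' b}" for b
      using carr_reindex_bvec[of A h b] h'h by fastforce
    show "finite {b\<in>B. \<epsilon> \<le> d (\<beta> b) (\<alpha> (h' b))}" if "\<epsilon> > 0" for \<epsilon>
    proof (rule finite_subset)
      show "{b\<in>B. \<epsilon> \<le> d (\<beta> b) (\<alpha> (h' b))} \<subseteq> h ` {a\<in>A. \<epsilon> \<le> d (\<alpha> a) (\<beta> (h a))}"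
        using hh' h' by (force simp: commute bij_betw_def)
    qed (use close[OF that] in blast)
  qed (use fcB free_controlled_image_subset[OF fcA] h h'
      in \<open>auto simp: bij_betw_def rlinear_reindex\<close>)
  ultimately show ?thesis
    unfolding controlled_iso_def h'_def
    using reindex_reindex_inv_into[OF h] reindex_inv_into_reindex[OF h] by blast
qed

section \<open>Realizing compact sets as supports\<close>

lemma free_controlled_if_approximates:
  assumes K: "closedin mtopology K" "K \<subseteq> E" and f: "f ` I \<subseteq> M - E"
    and far: "\<And>\<epsilon>. \<epsilon> > 0 \<Longrightarrow> finite {i\<in>I. \<forall>k\<in>K. \<epsilon> \<le> d (f i) k}"
  shows "free_controlled mtopology E I f"
  unfolding free_controlled_def
proof (intro conjI allI impI)
  show "f ` I \<subseteq> topspace mtopology - E"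
    using f by simp
  fix C assume "compactin (subtopology mtopology (topspace mtopology - E)) C"
  then have C: "compactin mtopology C" "C \<subseteq> M - E"
    by (simp_all add: compactin_subtopology)
  show "finite {i\<in>I. f i \<in> C}"
  proof (rule ccontr)
    let ?N = "{i\<in>I. f i \<in> C}"
    assume "infinite ?N"
    then obtain z where "z \<in> C" and near: "\<And>r. r > 0 \<Longrightarrow> infinite {i\<in>?N. f i \<in> mball z r}"
      using compactin_cluster_point[OF C(1)] by blast
    have "z \<in> K"
    proof (rule cluster_point_in_closed[OF K(1) far])
      show "z \<in> M"
        using \<open>z \<in> C\<close> C(2) by blast
      show "infinite {i\<in>I. f i \<in> mball z r}" if "r > 0" for r
        using near[OF that] by (rule infinite_super[rotated]) blast
    qed
    then show False
      using \<open>z \<in> C\<close> C(2) K(2) by blast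
  qed
qed

lemma fc_support_if_approximates:
  assumes K: "closedin mtopology K" "K \<subseteq> E" and f: "f ` I \<subseteq> M - E"
    and far: "\<And>\<epsilon>. \<epsilon> > 0 \<Longrightarrow> finite {i\<in>I. \<forall>k\<in>K. \<epsilon> \<le> d (f i) k}"
    and dense: "K \<subseteq> mtopology closure_of (f ` I)"
  shows "fc_support mtopology I f = K"
proof
  show "fc_support mtopology I f \<subseteq> K"
  proof
    fix z assume z: "z \<in> fc_support mtopology I f"
    show "z \<in> K"
    proof (rule cluster_point_in_closed[OF K(1) far])
      show "z \<in> M"
        using z by (simp add: fc_support_def derived_set_of_infinite_mball)
      show "infinite {i\<in>I. f i \<in> mball z r}" if "r > 0" for r
      proof
        assume "finite {i\<in>I. f i \<in> mball z r}"
        moreover have "f ` I \<inter> mball z r = f ` {i\<in>I. f i \<in> mball z r}"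
          by blast
        ultimately show False
          using z that by (metis (no_types, lifting) finite_imageI fc_support_def
              derived_set_of_infinite_mball mem_Collect_eq)
      qed
    qed
  qed
  show "K \<subseteq> fc_support mtopology I f"
  proof
    fix z assume "z \<in> K"
    then have "z \<in> mtopology closure_of (f ` I)" and "z \<notin> f ` I"
      using dense K(2) f by auto
    then show "z \<in> fc_support mtopology I f"
      by (simp add: fc_support_def closure_of)
  qed
qed

lemma exists_sequence_frequently_near:
  assumes "compactin mtopology K" and "K \<noteq> {}"
  obtains k :: "nat \<Rightarrow> 'a"
  where "range k \<subseteq> K" and "\<And>z r N. z \<in> K \<Longrightarrow> r > 0 \<Longrightarrow> \<exists>i\<ge>N. d z (k i) < r"
proof -
  have "\<forall>n. \<exists>F. finite F \<and> F \<subseteq> K \<and> K \<subseteq> (\<Union>x\<in>F. mball x (1 / Suc n))"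
    using compactin_imp_mtotally_bounded[OF assms(1)] unfolding mtotally_bounded_def by simp
  then obtain F where F: "\<And>n. finite (F n)" "\<And>n. F n \<subseteq> K"
    and cover: "\<And>n. K \<subseteq> (\<Union>x\<in>F n. mball x (1 / Suc n))"
    by metis
  have F_ne: "F n \<noteq> {}" for n
    using cover[of n] \<open>K \<noteq> {}\<close> by blast
  \<comment> \<open>the finer net F n is listed at the indices prod_encode (n, m) \<ge> n\<close>
  define k where "k i = from_nat_into (F (fst (prod_decode i))) (snd (prod_decode i))" for i
  have "k i \<in> F (fst (prod_decode i))" for i
    unfolding k_def by (rule from_nat_into[OF F_ne])
  then have "range k \<subseteq> K"
    using F(2) by blast
  moreover have "\<exists>i\<ge>N. d z (k i) < r" if "z \<in> K" and "r > 0" for z r N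
  proof -
    obtain n0 :: nat where "inverse (Suc n0) < r"
      using reals_Archimedean \<open>r > 0\<close> by blast
    define n where "n = max N n0"
    obtain x where "x \<in> F n" and "z \<in> mball x (1 / Suc n)"
      using cover[of n] \<open>z \<in> K\<close> by blast
    moreover obtain m where "from_nat_into (F n) m = x"
      using F(1) \<open>x \<in> F n\<close> by (meson countable_finite from_nat_into_surj)
    moreover have "1 / real (Suc n) \<le> 1 / Suc n0"
      unfolding n_def by (simp add: frac_le)
    ultimately have "k (prod_encode (n, m)) = x" and "d z x < r"
      using \<open>inverse (Suc n0) < r\<close> commute[of z x] by (auto simp: k_def inverse_eq_divide)
    moreover have "N \<le> prod_encode (n, m)"
      using le_prod_encode_1[of n m] unfolding n_def by linarith
    ultimately show ?thesis
      by metis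
  qed
  ultimately show ?thesis
    using that by blast
qed

lemma exists_approximating_sequence:
  assumes "compactin mtopology K" and "K \<noteq> {}" and dense: "mtopology closure_of (M - E) = M"
  obtains y :: "nat \<Rightarrow> 'a" where "range y \<subseteq> M - E"
    and "\<And>\<epsilon>. \<epsilon> > 0 \<Longrightarrow> finite {i. \<forall>k\<in>K. \<epsilon> \<le> d (y i) k}"
    and "K \<subseteq> mtopology closure_of (range y)"
proof -
  obtain k :: "nat \<Rightarrow> 'a" where k: "range k \<subseteq> K"
    and near: "\<And>z r N. z \<in> K \<Longrightarrow> r > 0 \<Longrightarrow> \<exists>i\<ge>N. d z (k i) < r"
    using exists_sequence_frequently_near[OF assms(1,2)] by blast
  have "K \<subseteq> M"
    using compactin_subset_topspace[OF assms(1)] by simp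
  have "\<exists>w. w \<in> M - E \<and> d (k i) w < 1 / Suc i" for i
  proof -
    have "k i \<in> mtopology closure_of (M - E)"
      using dense k \<open>K \<subseteq> M\<close> by blast
    then have "\<exists>w\<in>M - E. w \<in> mball (k i) (1 / Suc i)"
      unfolding metric_closure_of by simp
    then show ?thesis
      by auto
  qed
  then obtain y where y: "\<And>i. y i \<in> M - E" and close: "\<And>i. d (k i) (y i) < 1 / Suc i"
    by metis
  have small: "1 / Suc i < \<epsilon>" if "inverse (Suc n) < \<epsilon>" and "n \<le> i" for n i \<epsilon>
  proof -
    have "1 / real (Suc i) \<le> 1 / Suc n"
      using that(2) by (simp add: frac_le)
    then show ?thesis
      using that(1) by (simp add: inverse_eq_divide)
  qed
  show ?thesis
  proof
    show "range y \<subseteq> M - E"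
      using y by blast
    show "finite {i. \<forall>k\<in>K. \<epsilon> \<le> d (y i) k}" if "\<epsilon> > 0" for \<epsilon>
    proof -
      obtain N :: nat where N: "inverse (Suc N) < \<epsilon>"
        using reals_Archimedean \<open>\<epsilon> > 0\<close> by blast
      have "i < N" if "\<forall>k\<in>K. \<epsilon> \<le> d (y i) k" for i
      proof (rule ccontr)
        assume "\<not> i < N"
        then have "1 / Suc i < \<epsilon>"
          using small[OF N] by simp
        moreover have "\<epsilon> \<le> d (y i) (k i)"
          using that k by blast
        ultimately show False
          using close[of i] commute[of "k i" "y i"] by linarith
      qed
      then have "{i. \<forall>k\<in>K. \<epsilon> \<le> d (y i) k} \<subseteq> {..<N}"
        by blast
      then show ?thesis
        using finite_subset by blast
    qed
    show "K \<subseteq> mtopology closure_of (range y)"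
      unfolding metric_closure_of
    proof (intro subsetI CollectI conjI allI impI)
      fix z assume "z \<in> K"
      then show "z \<in> M"
        using \<open>K \<subseteq> M\<close> by blast
      fix r :: real assume "r > 0"
      obtain n :: nat where n: "inverse (Suc n) < r/2"
        using reals_Archimedean \<open>r > 0\<close> half_gt_zero by blast
      obtain i where "n \<le> i" and "d z (k i) < r/2"
        using near[OF \<open>z \<in> K\<close>, of "r/2" n] \<open>r > 0\<close> by auto
      moreover have "d (k i) (y i) < r/2"
        using close[of i] small[OF n \<open>n \<le> i\<close>] by linarith
      moreover have "k i \<in> M" "y i \<in> M"
        using k \<open>K \<subseteq> M\<close> y by blast+
      ultimately have "y i \<in> mball z r"
        using triangle[of z "k i" "y i"] \<open>z \<in> M\<close> by simp
      then show "\<exists>w\<in>range y. w \<in> mball z r"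
        by blast
    qed
  qed
qed

lemma fc_support_realization:
  assumes "compactin mtopology K" and "K \<subseteq> E" and "mtopology closure_of (M - E) = M"
  shows "\<exists>(A' :: nat set) \<alpha>'. free_controlled mtopology E A' \<alpha>' \<and> fc_support mtopology A' \<alpha>' = K"
proof (cases "K = {}")
  case True
  then show ?thesis
    by (intro exI[of _ "{}"]) (simp add: free_controlled_def fc_support_def)
next
  case False
  then obtain y :: "nat \<Rightarrow> 'a" where "range y \<subseteq> M - E"
    and "\<And>\<epsilon>. \<epsilon> > 0 \<Longrightarrow> finite {i. \<forall>k\<in>K. \<epsilon> \<le> d (y i) k}"
    and "K \<subseteq> mtopology closure_of (range y)"
    using exists_approximating_sequence assms by blast
  moreover have "closedin mtopology K"
    using assms(1) compactin_imp_closedin Hausdorff_space_mtopology by blast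
  ultimately show ?thesis
    using free_controlled_if_approximates[of K E y UNIV] fc_support_if_approximates[of K E y UNIV]
      assms(2) by auto
qed

lemma controlled_iso_iff:
  fixes A :: "'i set" and B :: "'j set"
  assumes cs: "compact_space mtopology" and "closedin mtopology E"
    and fcA: "free_controlled mtopology E A \<alpha>" and fcB: "free_controlled mtopology E B \<beta>"
  shows "controlled_iso TYPE('r::ring_1) mtopology E A \<alpha> B \<beta> \<longleftrightarrow>
    mod_iso TYPE('r) A B \<and> fc_support mtopology A \<alpha> = fc_support mtopology B \<beta>"
proof
  assume "controlled_iso TYPE('r) mtopology E A \<alpha> B \<beta>"
  then obtain \<phi> :: "('i \<Rightarrow> 'r) \<Rightarrow> ('j \<Rightarrow> 'r)" and \<psi> where
    \<phi>: "controlled_hom mtopology E A \<alpha> B \<beta> \<phi>" and \<psi>: "controlled_hom mtopology E B \<beta> A \<alpha> \<psi>"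
    and inv: "\<forall>x\<in>free_mod A. \<psi> (\<phi> x) = x" "\<forall>y\<in>free_mod B. \<phi> (\<psi> y) = y"
    unfolding controlled_iso_def by blast
  then have lin: "rlinear A B \<phi>" "rlinear B A \<psi>"
    unfolding controlled_hom_def by blast+
  then have "mod_iso TYPE('r) A B"
    unfolding mod_iso_def using inv by blast
  moreover have "fc_support mtopology A \<alpha> \<subseteq> fc_support mtopology B \<beta>"
    using controlled_hom_support_subset[OF \<phi> fcB] bvec_image_nonzero[OF lin(2) inv(1)]
      fc_support_subset[OF cs fcA \<open>closedin mtopology E\<close>] by blast
  moreover have "fc_support mtopology B \<beta> \<subseteq> fc_support mtopology A \<alpha>"
    using controlled_hom_support_subset[OF \<psi> fcA] bvec_image_nonzero[OF lin(1) inv(2)]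
      fc_support_subset[OF cs fcB \<open>closedin mtopology E\<close>] by blast
  ultimately show "mod_iso TYPE('r) A B \<and> fc_support mtopology A \<alpha> = fc_support mtopology B \<beta>"
    by blast
next
  assume "mod_iso TYPE('r) A B \<and> fc_support mtopology A \<alpha> = fc_support mtopology B \<beta>"
  then have iso: "mod_iso TYPE('r) A B"
    and same: "fc_support mtopology A \<alpha> = fc_support mtopology B \<beta>"
    by blast+
  show "controlled_iso TYPE('r) mtopology E A \<alpha> B \<beta>"
  proof (cases "fc_support mtopology A \<alpha> = {}")
    case True
    then have "finite A" "finite B"
      using same fc_support_nonempty_iff[OF cs fcA] fc_support_nonempty_iff[OF cs fcB] by auto
    with iso show ?thesis
      unfolding mod_iso_def controlled_iso_def
      using controlled_hom_of_finite[OF t1_space_mtopology fcA]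
        controlled_hom_of_finite[OF t1_space_mtopology fcB] by blast
  next
    case False
    then obtain h where "bij_betw h A B" "\<And>\<epsilon>. \<epsilon> > 0 \<Longrightarrow> finite {a\<in>A. \<epsilon> \<le> d (\<alpha> a) (\<beta> (h a))}"
      using exists_close_bij[OF cs \<open>closedin mtopology E\<close> fcA fcB same] by blast
    then show ?thesis
      by (rule controlled_iso_if_close_bij[OF fcA fcB])
  qed
qed

lemma mod_iso_if_fc_supports_nonempty:
  assumes cs: "compact_space mtopology" and "closedin mtopology E"
    and fcA: "free_controlled mtopology E A \<alpha>" and fcB: "free_controlled mtopology E B \<beta>"
    and "fc_support mtopology A \<alpha> \<noteq> {}" and "fc_support mtopology B \<beta> \<noteq> {}"
  shows "mod_iso TYPE('r::ring_1) A B"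
proof -
  have "infinite A" "infinite B"
    using assms fc_support_nonempty_iff[OF cs] by blast+
  moreover have "countable A" "countable B"
    using free_controlled_countable[OF cs _ \<open>closedin mtopology E\<close>] fcA fcB by blast+
  ultimately have "bij_betw (from_nat_into B \<circ> to_nat_on A) A B"
    by (meson bij_betw_trans to_nat_on_infinite bij_betw_from_nat_into)
  then show ?thesis
    by (rule mod_iso_if_bij_betw)
qed

end

theorem proposition3p2:
  fixes X :: "'x topology" and E :: "'x set"
    and A :: "'a set" and \<alpha> :: "'a \<Rightarrow> 'x"
    and B :: "'b set" and \<beta> :: "'b \<Rightarrow> 'x"
  assumes "compact_space X" and "metrizable_space X"
    and "closedin X E" and "E \<noteq> {}"
    and "X closure_of (topspace X - E) = topspace X"
    and "free_controlled X E A \<alpha>" and "free_controlled X E B \<beta>"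
  shows "(controlled_iso TYPE('r::ring_1) X E A \<alpha> B \<beta> \<longleftrightarrow>
            mod_iso TYPE('r) A B \<and> fc_support X A \<alpha> = fc_support X B \<beta>)
       \<and> (fc_support X A \<alpha> \<noteq> {} \<and> fc_support X B \<beta> \<noteq> {} \<longrightarrow> mod_iso TYPE('r) A B)
       \<and> (\<forall>K. compactin X K \<and> K \<subseteq> E \<longrightarrow>
            (\<exists>(A' :: nat set) (\<alpha>' :: nat \<Rightarrow> 'x). free_controlled X E A' \<alpha>' \<and> fc_support X A' \<alpha>' = K))"
proof -
  obtain M d where "Metric_space M d" and X: "X = Metric_space.mtopology M d"
    using assms(2) unfolding metrizable_space_def by blast
  interpret Metric_space M d
    by fact
  have cs: "compact_space mtopology" and cE: "closedin mtopology E"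
    and dense: "mtopology closure_of (M - E) = M"
    and fcA: "free_controlled mtopology E A \<alpha>" and fcB: "free_controlled mtopology E B \<beta>"
    using assms unfolding X by simp_all
  show ?thesis
    unfolding X
  proof (intro conjI allI impI)
    show "controlled_iso TYPE('r) mtopology E A \<alpha> B \<beta> \<longleftrightarrow>
        mod_iso TYPE('r) A B \<and> fc_support mtopology A \<alpha> = fc_support mtopology B \<beta>"
      by (rule controlled_iso_iff[OF cs cE fcA fcB])
    show "mod_iso TYPE('r) A B"
      if "fc_support mtopology A \<alpha> \<noteq> {} \<and> fc_support mtopology B \<beta> \<noteq> {}"
      using that by (intro mod_iso_if_fc_supports_nonempty[OF cs cE fcA fcB]) auto
    show "\<exists>(A' :: nat set) \<alpha>'. free_controlled mtopology E A' \<alpha>' \<and> fc_support mtopology A' \<alpha>' = K"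
      if "compactin mtopology K \<and> K \<subseteq> E" for K
      using that fc_support_realization[OF _ _ dense] by blast
  qed
qed

end
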